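(* Let $G$ be a connected graph with at least $2$ vertices. Suppose that either $G$ is co-connected, or $G$ has a dominating vertex $x$ such that $G-x$ is connected and co-connected. Then there exists a connecting hypergraph $H$ of $G$ of minimum cost such that $G[E]$ is co-connected for every $E\in H$.
   Context: All graphs are finite, simple and undirected. $G[X]$ denotes the subgraph induced by $X\subseteq V(G)$, and $G-x$ the subgraph induced by $V(G)\setminus\{x\}$. The complement $\bar G$ has vertex set $V(G)$ and an edge $xy$ ($x\neq y$) iff $xy\notin E(G)$; $G$ is co-connected if $\bar G$ is connected. A vertex is dominating if it is adjacent to all other vertices. A connecting hypergraph of $G$ is a set $H$ of subsets of $V(G)$ such that every $E\in H$ satisfies $|E|\ge 2$ and $G[E]$ is connected, and for every pair of distinct non-adjacent vertices $u,v$ of $G$ there exists $E\in H$ with $u,v\in E$. Its cost is $\mathrm{cost}(H)=\sum_{E\in H}(|E|-2)$. *)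

theory Defs
  imports Main
begin

text \<open>A finite simple graph: finite vertex set V, symmetric irreflexive adjacency Adj
 (only its restriction to V matters).\<close>

definition simple_graph :: "'a set \<Rightarrow> ('a \<Rightarrow> 'a \<Rightarrow> bool) \<Rightarrow> bool" where
  "simple_graph V Adj \<longleftrightarrow> finite V \<and> (\<forall>u v. Adj u v \<longrightarrow> Adj v u) \<and> (\<forall>u. \<not> Adj u u)"

definition connected_on :: "('a \<Rightarrow> 'a \<Rightarrow> bool) \<Rightarrow> 'a set \<Rightarrow> bool" where
  "connected_on Adj X \<longleftrightarrow>
     (\<forall>u\<in>X. \<forall>v\<in>X. (\<lambda>a b. a \<in> X \<and> b \<in> X \<and> Adj a b)\<^sup>*\<^sup>* u v)"

definition compl_adj :: "('a \<Rightarrow> 'a \<Rightarrow> bool) \<Rightarrow> 'a \<Rightarrow> 'a \<Rightarrow> bool" where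
  "compl_adj Adj u v \<longleftrightarrow> u \<noteq> v \<and> \<not> Adj u v"

definition coconnected_on :: "('a \<Rightarrow> 'a \<Rightarrow> bool) \<Rightarrow> 'a set \<Rightarrow> bool" where
  "coconnected_on Adj X \<longleftrightarrow> connected_on (compl_adj Adj) X"

definition dominating :: "'a set \<Rightarrow> ('a \<Rightarrow> 'a \<Rightarrow> bool) \<Rightarrow> 'a \<Rightarrow> bool" where
  "dominating V Adj x \<longleftrightarrow> x \<in> V \<and> (\<forall>y\<in>V. y \<noteq> x \<longrightarrow> Adj x y)"

definition connecting_hypergraph :: "'a set \<Rightarrow> ('a \<Rightarrow> 'a \<Rightarrow> bool) \<Rightarrow> 'a set set \<Rightarrow> bool" where
  "connecting_hypergraph V Adj H \<longleftrightarrow>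
     (\<forall>E\<in>H. E \<subseteq> V \<and> 2 \<le> card E \<and> connected_on Adj E) \<and>
     (\<forall>u\<in>V. \<forall>v\<in>V. u \<noteq> v \<and> \<not> Adj u v \<longrightarrow> (\<exists>E\<in>H. u \<in> E \<and> v \<in> E))"

definition hcost :: "'a set set \<Rightarrow> nat" where
  "hcost H = (\<Sum>E\<in>H. card E - 2)"

definition min_cost_connecting_hypergraph :: "'a set \<Rightarrow> ('a \<Rightarrow> 'a \<Rightarrow> bool) \<Rightarrow> 'a set set \<Rightarrow> bool" where
  "min_cost_connecting_hypergraph V Adj H \<longleftrightarrow>
     connecting_hypergraph V Adj H \<and>
     (\<forall>H'. connecting_hypergraph V Adj H' \<longrightarrow> hcost H \<le> hcost H')"

end

theory Submission
  imports Defs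
begin

(*
  Among the minimum-cost connecting hypergraphs take one with the fewest hyperedges. All non-edges
  of G lie in a set V0 (V itself, or V - x since a dominating vertex lies on no non-edge) inducing a
  connected and co-connected graph. A hyperedge E that is not co-connected contains a non-edge
  (otherwise deleting E helps) and hence a proper co-component C, which no non-edge joins to E - C.
  If V0 lies in C, replacing E by V0 lowers the cost. Otherwise co-connectivity of V0 gives a
  non-edge cy leaving C, and thus leaving E. A hyperedge F through c and y, together with one
  hyperedge through y and each vertex of C not dominated by F, merges with C into a
  connected set no larger than card C + 1 plus the cost of the merged hyperedges, so E and these
  hyperedges can be replaced by it at no extra cost. If E - C contains no non-edge, this saves a
  hyperedge. Otherwise also add the star on E - C and one vertex of C: in the resulting optimal
  hypergraph the star is in the previous situation, with E - C in the role of C.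
*)

definition valid_hyperedge :: "'a set \<Rightarrow> ('a \<Rightarrow> 'a \<Rightarrow> bool) \<Rightarrow> 'a set \<Rightarrow> bool" where
  "valid_hyperedge V Adj E \<longleftrightarrow> E \<subseteq> V \<and> 2 \<le> card E \<and> connected_on Adj E"

definition covers_non_edges :: "('a \<Rightarrow> 'a \<Rightarrow> bool) \<Rightarrow> 'a set set \<Rightarrow> 'a set \<Rightarrow> bool" where
  "covers_non_edges Adj H X \<longleftrightarrow> (\<forall>u\<in>X. \<forall>v\<in>X. compl_adj Adj u v \<longrightarrow> (\<exists>E\<in>H. u \<in> E \<and> v \<in> E))"

definition optimal_connecting_hypergraph :: "'a set \<Rightarrow> ('a \<Rightarrow> 'a \<Rightarrow> bool) \<Rightarrow> 'a set set \<Rightarrow> bool" where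
  "optimal_connecting_hypergraph V Adj H \<longleftrightarrow> min_cost_connecting_hypergraph V Adj H \<and>
     (\<forall>H'. min_cost_connecting_hypergraph V Adj H' \<longrightarrow> card H \<le> card H')"

lemma connecting_hypergraph_iff:
  "connecting_hypergraph V Adj H \<longleftrightarrow> (\<forall>E\<in>H. valid_hyperedge V Adj E) \<and> covers_non_edges Adj H V"
  unfolding connecting_hypergraph_def valid_hyperedge_def covers_non_edges_def compl_adj_def by blast

lemma covers_non_edges_subset: "X \<subseteq> E \<Longrightarrow> E \<in> N \<Longrightarrow> covers_non_edges Adj N X"
  unfolding covers_non_edges_def by blast

lemma covers_non_edges_mono:
  "covers_non_edges Adj N X \<Longrightarrow> \<forall>A\<in>N. \<exists>B\<in>N'. A \<subseteq> B \<Longrightarrow> covers_non_edges Adj N' X"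
  unfolding covers_non_edges_def by (meson subsetD)

lemma covers_non_edges_closed_part:
  assumes "symp (compl_adj Adj)" "\<forall>s\<in>C. \<forall>t\<in>X - C. \<not> compl_adj Adj s t"
  shows "covers_non_edges Adj {C, X - C} X"
  unfolding covers_non_edges_def
proof (intro ballI impI)
  fix u v assume "u \<in> X" "v \<in> X" "compl_adj Adj u v"
  moreover have "compl_adj Adj v u"
    using \<open>compl_adj Adj u v\<close> assms(1) by (blast dest: sympD)
  ultimately have "{u, v} \<subseteq> C \<or> {u, v} \<subseteq> X - C"
    using assms(2) by blast
  then show "\<exists>G\<in>{C, X - C}. u \<in> G \<and> v \<in> G"
    by auto
qed

lemma covers_non_edges_insert:
  assumes "symp (compl_adj Adj)" "\<forall>t\<in>X. \<not> compl_adj Adj c t"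
  shows "covers_non_edges Adj {X} (insert c X)"
  unfolding covers_non_edges_def
proof (intro ballI impI)
  fix u v assume "u \<in> insert c X" "v \<in> insert c X" "compl_adj Adj u v"
  moreover have "compl_adj Adj v u" "u \<noteq> v"
    using \<open>compl_adj Adj u v\<close> assms(1) unfolding compl_adj_def by (auto dest: sympD)
  ultimately show "\<exists>G\<in>{X}. u \<in> G \<and> v \<in> G"
    using assms(2) by blast
qed

lemma simple_graph_symp: "simple_graph V Adj \<Longrightarrow> symp Adj"
  unfolding simple_graph_def symp_def by blast

lemma symp_compl_adj: "symp Adj \<Longrightarrow> symp (compl_adj Adj)"
  unfolding compl_adj_def symp_def by blast

lemma connected_on_if_reaches:
  assumes "symp r" and "\<forall>v\<in>X. (\<lambda>a b. a \<in> X \<and> b \<in> X \<and> r a b)\<^sup>*\<^sup>* v u"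
  shows "connected_on r X"
proof -
  let ?r = "\<lambda>a b. a \<in> X \<and> b \<in> X \<and> r a b"
  have "symp ?r\<^sup>*\<^sup>*"
    by (rule symp_rtranclp) (use assms(1) in \<open>auto simp: symp_def\<close>)
  then show ?thesis
    using assms(2) unfolding connected_on_def by (meson rtranclp_trans sympD)
qed

lemma connected_on_walk_mono:
  assumes "connected_on r G" "G \<subseteq> M" "u \<in> G" "v \<in> G"
  shows "(\<lambda>a b. a \<in> M \<and> b \<in> M \<and> r a b)\<^sup>*\<^sup>* u v"
proof -
  have "(\<lambda>a b. a \<in> G \<and> b \<in> G \<and> r a b) \<le> (\<lambda>a b. a \<in> M \<and> b \<in> M \<and> r a b)"
    using assms(2) by auto
  then show ?thesis
    using assms(1,3,4) rtranclp_mono unfolding connected_on_def by blast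
qed

lemma connected_on_exit:
  assumes "connected_on r X" "a \<in> X" "a \<in> A" "b \<in> X" "b \<notin> A"
  shows "\<exists>c\<in>X \<inter> A. \<exists>y\<in>X - A. r c y"
proof -
  have "(\<lambda>a b. a \<in> X \<and> b \<in> X \<and> r a b)\<^sup>*\<^sup>* a b"
    using assms unfolding connected_on_def by blast
  then show ?thesis
    using assms(3,5) by (induction rule: rtranclp_induct) blast+
qed

lemma connected_on_component:
  assumes "symp r" "p \<in> X" "\<not> connected_on r X"
  obtains C where "p \<in> C" "C \<subset> X" "\<forall>s\<in>C. \<forall>t\<in>X - C. \<not> r s t"
proof
  let ?r = "\<lambda>a b. a \<in> X \<and> b \<in> X \<and> r a b"
  define C where "C = {v \<in> X. ?r\<^sup>*\<^sup>* p v}"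
  show "p \<in> C" "\<forall>s\<in>C. \<forall>t\<in>X - C. \<not> r s t"
    using assms(2) unfolding C_def by (auto intro: rtranclp.rtrancl_into_rtrancl)
  have "symp ?r\<^sup>*\<^sup>*"
    by (rule symp_rtranclp) (use assms(1) in \<open>auto simp: symp_def\<close>)
  then have "C \<noteq> X"
    using assms(3) connected_on_if_reaches[OF assms(1), of X p] unfolding C_def
    by (auto dest: sympD)
  then show "C \<subset> X"
    unfolding C_def by blast
qed

lemma connected_on_Union_hub:
  assumes "symp r" "\<forall>G\<in>S. connected_on r G \<and> y \<in> G" "\<forall>v\<in>X - \<Union>S. \<exists>f\<in>\<Union>S. r v f"
  shows "connected_on r (X \<union> \<Union>S)"
proof (rule connected_on_if_reaches[OF assms(1)])
  let ?M = "X \<union> \<Union>S"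
  let ?r = "\<lambda>a b. a \<in> ?M \<and> b \<in> ?M \<and> r a b"
  have to_hub: "?r\<^sup>*\<^sup>* v y" if "v \<in> \<Union>S" for v
    using that assms(2) connected_on_walk_mono[of r _ ?M v y] by blast
  show "\<forall>v\<in>?M. ?r\<^sup>*\<^sup>* v y"
  proof
    fix v assume "v \<in> ?M"
    show "?r\<^sup>*\<^sup>* v y"
    proof (cases "v \<in> \<Union>S")
      case False
      then obtain f where "f \<in> \<Union>S" "r v f"
        using \<open>v \<in> ?M\<close> assms(3) by blast
      then show ?thesis
        using \<open>v \<in> ?M\<close> to_hub converse_rtranclp_into_rtranclp[of ?r v f y] by blast
    qed (rule to_hub)
  qed
qed

lemma connected_on_star:
  assumes "symp Adj" "\<forall>v\<in>X. v \<noteq> p \<longrightarrow> Adj p v"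
  shows "connected_on Adj (insert p X)"
proof -
  have "connected_on Adj {p}"
    unfolding connected_on_def by simp
  moreover have "\<forall>v\<in>X - \<Union>{{p}}. \<exists>f\<in>\<Union>{{p}}. Adj v f"
    using assms by (auto dest: sympD)
  ultimately have "connected_on Adj (X \<union> \<Union>{{p}})"
    using connected_on_Union_hub[OF assms(1), of "{{p}}" p X] by blast
  then show ?thesis
    by simp
qed

lemma valid_hyperedge_star_part:
  assumes "symp Adj" "E \<subseteq> V" "finite E" "C \<subset> E" "p \<in> C"
    and "\<forall>t\<in>E - C. \<not> compl_adj Adj p t"
  shows "valid_hyperedge V Adj (insert p (E - C))"
proof -
  have "\<forall>v\<in>E - C. v \<noteq> p \<longrightarrow> Adj p v"
    using assms(6) unfolding compl_adj_def by fastforce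
  then have "connected_on Adj (insert p (E - C))"
    by (rule connected_on_star[OF assms(1)])
  moreover have "E - C \<noteq> {}" "p \<notin> E - C"
    using assms(4,5) by blast+
  then have "2 \<le> card (insert p (E - C))"
    using assms(3) by (simp add: Suc_leI card_gt_0_iff)
  ultimately show ?thesis
    using assms(2,4,5) unfolding valid_hyperedge_def by blast
qed

lemma connecting_hypergraph_finite:
  assumes "simple_graph V Adj" "connecting_hypergraph V Adj H"
  shows "finite H"
proof -
  have "H \<subseteq> Pow V"
    using assms(2) unfolding connecting_hypergraph_def by auto
  then show ?thesis
    using assms(1) unfolding simple_graph_def by (auto intro: finite_subset)
qed

lemma connecting_hypergraph_replace:
  assumes "connecting_hypergraph V Adj H" "K \<subseteq> H"
    and "\<forall>E\<in>N. valid_hyperedge V Adj E" "\<forall>E\<in>K. covers_non_edges Adj N E"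
  shows "connecting_hypergraph V Adj ((H - K) \<union> N)"
  unfolding connecting_hypergraph_iff
proof
  show "\<forall>E\<in>(H - K) \<union> N. valid_hyperedge V Adj E"
    using assms(1,3) unfolding connecting_hypergraph_iff by blast
  show "covers_non_edges Adj ((H - K) \<union> N) V"
    unfolding covers_non_edges_def
  proof (intro ballI impI)
    fix u v assume "u \<in> V" "v \<in> V" "compl_adj Adj u v"
    then obtain G where "G \<in> H" "u \<in> G" "v \<in> G"
      using assms(1) unfolding connecting_hypergraph_iff covers_non_edges_def by blast
    then show "\<exists>E\<in>(H - K) \<union> N. u \<in> E \<and> v \<in> E"
      using assms(4) \<open>compl_adj Adj u v\<close> unfolding covers_non_edges_def by blast
  qed
qed

lemma hcost_insert_le: "finite H \<Longrightarrow> hcost (insert E H) \<le> card E - 2 + hcost H"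
  unfolding hcost_def by (simp add: sum.insert_if)

lemma hcost_replace_le:
  assumes "finite H" "K \<subseteq> H" "finite N"
  shows "hcost ((H - K) \<union> N) + hcost K \<le> hcost H + hcost N"
proof -
  have "hcost H = hcost (H - K) + hcost K"
    unfolding hcost_def using assms(1,2) by (metis sum.subset_diff)
  moreover have "hcost ((H - K) \<union> N) \<le> hcost (H - K) + hcost N"
    unfolding hcost_def using assms(1,3) by (simp add: sum_Un_nat)
  ultimately show ?thesis by linarith
qed

lemma card_replace_le:
  assumes "finite H" "K \<subseteq> H"
  shows "card ((H - K) \<union> N) + card K \<le> card H + card N"
proof -
  have "card (H - K) + card K = card H"
    using assms by (metis card_Diff_subset card_mono finite_subset le_add_diff_inverse2)
  then show ?thesis
    using card_Un_le[of "H - K" N] by linarith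
qed

lemma optimal_connecting_hypergraph_exists:
  assumes "connected_on Adj V" "2 \<le> card V"
  shows "\<exists>H. optimal_connecting_hypergraph V Adj H"
proof -
  have "connecting_hypergraph V Adj {V}"
    using assms unfolding connecting_hypergraph_def by auto
  then obtain H0 where "min_cost_connecting_hypergraph V Adj H0"
    unfolding min_cost_connecting_hypergraph_def by (metis ex_has_least_nat)
  then show ?thesis
    unfolding optimal_connecting_hypergraph_def by (metis ex_has_least_nat)
qed

lemma optimal_connecting_hypergraph_connecting:
  "optimal_connecting_hypergraph V Adj H \<Longrightarrow> connecting_hypergraph V Adj H"
  unfolding optimal_connecting_hypergraph_def min_cost_connecting_hypergraph_def by blast

lemma optimal_connecting_hypergraph_subset:
  "optimal_connecting_hypergraph V Adj H \<Longrightarrow> E \<in> H \<Longrightarrow> E \<subseteq> V"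
  using optimal_connecting_hypergraph_connecting unfolding connecting_hypergraph_def by blast

context
  fixes V :: "'a set" and Adj H K N
  assumes sg: "simple_graph V Adj" and opt: "optimal_connecting_hypergraph V Adj H"
    and KH: "K \<subseteq> H" and finN: "finite N" and valid: "\<forall>E\<in>N. valid_hyperedge V Adj E"
    and covers: "\<forall>E\<in>K. covers_non_edges Adj N E"
begin

private lemma replacement:
  shows "connecting_hypergraph V Adj ((H - K) \<union> N)"
    and "hcost ((H - K) \<union> N) + hcost K \<le> hcost H + hcost N"
    and "card ((H - K) \<union> N) + card K \<le> card H + card N"
proof -
  have ch: "connecting_hypergraph V Adj H"
    using opt by (rule optimal_connecting_hypergraph_connecting)
  show "connecting_hypergraph V Adj ((H - K) \<union> N)"
    using connecting_hypergraph_replace[OF ch KH valid covers] .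
  have "finite H"
    using connecting_hypergraph_finite[OF sg ch] .
  then show "hcost ((H - K) \<union> N) + hcost K \<le> hcost H + hcost N"
    and "card ((H - K) \<union> N) + card K \<le> card H + card N"
    using hcost_replace_le[OF _ KH finN] card_replace_le[OF _ KH] by auto
qed

lemma optimal_replace_hcost_ge: "hcost K \<le> hcost N"
proof -
  have "hcost H \<le> hcost ((H - K) \<union> N)"
    using opt replacement(1)
    unfolding optimal_connecting_hypergraph_def min_cost_connecting_hypergraph_def by blast
  then show ?thesis
    using replacement(2) by linarith
qed

lemma optimal_replace:
  assumes "hcost N \<le> hcost K" "card N \<le> card K"
  shows "optimal_connecting_hypergraph V Adj ((H - K) \<union> N)"
proof -
  have "hcost ((H - K) \<union> N) \<le> hcost H" "card ((H - K) \<union> N) \<le> card H"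
    using replacement(2,3) assms by linarith+
  then show ?thesis
    using opt replacement(1)
    unfolding optimal_connecting_hypergraph_def min_cost_connecting_hypergraph_def
    by (meson le_trans)
qed

lemma optimal_replace_card_ge:
  assumes "hcost N \<le> hcost K"
  shows "card K \<le> card N"
proof -
  have "optimal_connecting_hypergraph V Adj ((H - K) \<union> N)" if "card N < card K"
    using optimal_replace[OF assms] that by simp
  moreover have "card H \<le> card ((H - K) \<union> N)" if "optimal_connecting_hypergraph V Adj ((H - K) \<union> N)"
    using opt that unfolding optimal_connecting_hypergraph_def by blast
  ultimately show ?thesis
    using replacement(3) by fastforce
qed

end

lemma card_Un_Union_le_hcost:
  assumes "finite C" "finite F" "finite R" "\<forall>G\<in>R. finite G" "F \<notin> R" "2 \<le> card F"
    and "C \<inter> F \<noteq> {}" "\<forall>G\<in>R. G \<inter> C \<noteq> {} \<and> G \<inter> (F - C) \<noteq> {}"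
  shows "card (C \<union> \<Union>(insert F R)) \<le> card C + hcost (insert F R) + 1"
proof -
  have "card C + card F = card (C \<union> F) + card (C \<inter> F)"
    using card_Un_Int[OF assms(1,2)] .
  moreover have "card (C \<inter> F) \<noteq> 0"
    using assms(1,7) by simp
  ultimately have CF: "card (C \<union> F) + 1 \<le> card C + card F"
    by linarith
  have "card (G - (C \<union> F)) \<le> card G - 2" if "G \<in> R" for G
  proof -
    have diff: "card (G - (C \<union> F)) = card G - card (G \<inter> (C \<union> F))"
      using assms(4) that by (simp add: card_Diff_subset_Int)
    have "G \<inter> C \<noteq> {}" "G \<inter> (F - C) \<noteq> {}"
      using assms(8) that by blast+
    then obtain a b where ab: "a \<in> G \<inter> C" "b \<in> G \<inter> (F - C)"
      by blast
    then have "card {a, b} \<le> card (G \<inter> (C \<union> F))"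
      using assms(4) that by (intro card_mono) auto
    moreover have "a \<noteq> b"
      using ab by blast
    ultimately show ?thesis
      using diff by simp
  qed
  then have "(\<Sum>G\<in>R. card (G - (C \<union> F))) \<le> hcost R"
    unfolding hcost_def by (rule sum_mono)
  then have "card (\<Union>G\<in>R. G - (C \<union> F)) \<le> hcost R"
    using card_UN_le[OF assms(3), of "\<lambda>G. G - (C \<union> F)"] by linarith
  moreover have "C \<union> \<Union>(insert F R) = (C \<union> F) \<union> (\<Union>G\<in>R. G - (C \<union> F))"
    by auto
  ultimately have "card (C \<union> \<Union>(insert F R)) \<le> card (C \<union> F) + hcost R"
    using card_Un_le[of "C \<union> F" "\<Union>G\<in>R. G - (C \<union> F)"] by simp
  moreover have "hcost (insert F R) = card F - 2 + hcost R"
    unfolding hcost_def using assms(3,5) by simp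
  ultimately show ?thesis
    using CF assms(6) by linarith
qed

lemma hyperedges_to_undominated_vertices:
  assumes ch: "connecting_hypergraph V Adj H" and "C \<subseteq> V" "y \<in> V" "y \<notin> C" "y \<in> F"
  obtains R where "R \<subseteq> H" "F \<notin> R" "\<forall>G\<in>R. y \<in> G \<and> G \<inter> C \<noteq> {}"
    "\<forall>a\<in>C - \<Union>R - F. \<exists>f\<in>F. Adj a f"
proof -
  define T where "T = {a \<in> C. \<forall>f\<in>F. a \<noteq> f \<and> \<not> Adj a f}"
  have "\<forall>a\<in>T. \<exists>G. G \<in> H \<and> a \<in> G \<and> y \<in> G"
    using ch assms(2-5) unfolding T_def connecting_hypergraph_def by blast
  then obtain g where g: "\<forall>a\<in>T. g a \<in> H \<and> a \<in> g a \<and> y \<in> g a"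
    by (rule bchoice[elim_format]) blast
  show ?thesis
  proof (rule that)
    show "g ` T \<subseteq> H" "\<forall>G\<in>g ` T. y \<in> G \<and> G \<inter> C \<noteq> {}"
      using g unfolding T_def by auto
    show "F \<notin> g ` T"
      using g unfolding T_def by fastforce
    show "\<forall>a\<in>C - \<Union>(g ` T) - F. \<exists>f\<in>F. Adj a f"
      using g unfolding T_def by blast
  qed
qed

(* The merged hyperedge is C \<union> \<Union>S, where S consists of a hyperedge F through c and y and, for
   every vertex of C not dominated by F, a hyperedge through that vertex and y. *)
lemma merged_hyperedge_exists:
  assumes sg: "simple_graph V Adj" and ch: "connecting_hypergraph V Adj H"
    and CV: "C \<subseteq> V" and cC: "c \<in> C" and yV: "y \<in> V" and yC: "y \<notin> C"
    and cy: "compl_adj Adj c y"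
  shows "\<exists>S. S \<subseteq> H \<and> S \<noteq> {} \<and> (\<forall>G\<in>S. y \<in> G) \<and> valid_hyperedge V Adj (C \<union> \<Union>S) \<and>
    card (C \<union> \<Union>S) \<le> card C + hcost S + 1"
proof -
  have finV: "finite V"
    using sg unfolding simple_graph_def by blast
  have valid: "\<forall>G\<in>H. valid_hyperedge V Adj G"
    using ch unfolding connecting_hypergraph_iff by blast
  then have finH: "\<forall>G\<in>H. finite G"
    using finV unfolding valid_hyperedge_def by (blast intro: finite_subset)
  obtain F where FH: "F \<in> H" and cF: "c \<in> F" and yF: "y \<in> F"
    using ch cC CV yV cy unfolding connecting_hypergraph_def compl_adj_def by blast
  obtain R where RH: "R \<subseteq> H" and FR: "F \<notin> R" and yR: "\<forall>G\<in>R. y \<in> G \<and> G \<inter> C \<noteq> {}"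
    and dom: "\<forall>a\<in>C - \<Union>R - F. \<exists>f\<in>F. Adj a f"
    using hyperedges_to_undominated_vertices[OF ch CV yV yC yF] .
  define S where "S = insert F R"
  have SH: "S \<subseteq> H" and yS: "\<forall>G\<in>S. y \<in> G"
    using FH yF RH yR unfolding S_def by auto
  have MV: "C \<union> \<Union>S \<subseteq> V"
    using CV valid SH unfolding valid_hyperedge_def by blast
  have "card (C \<union> \<Union>S) \<le> card C + hcost S + 1"
    unfolding S_def
  proof (rule card_Un_Union_le_hcost)
    show "finite C" "finite R"
      using MV finV finite_subset connecting_hypergraph_finite[OF sg ch] RH by blast+
  qed (use finH FH RH FR yR yF yC cC cF valid in \<open>auto simp: valid_hyperedge_def\<close>)
  moreover have "connected_on Adj (C \<union> \<Union>S)"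
  proof (rule connected_on_Union_hub[OF simple_graph_symp[OF sg]])
    show "\<forall>G\<in>S. connected_on Adj G \<and> y \<in> G"
      using valid SH yS unfolding valid_hyperedge_def by blast
    show "\<forall>v\<in>C - \<Union>S. \<exists>f\<in>\<Union>S. Adj v f"
      using dom unfolding S_def by auto
  qed
  moreover have "2 \<le> card (C \<union> \<Union>S)"
  proof -
    have "{c, y} \<subseteq> C \<union> \<Union>S" "c \<noteq> y"
      using cC yF cy unfolding S_def compl_adj_def by auto
    then show ?thesis
      using card_mono[of "C \<union> \<Union>S" "{c, y}"] finite_subset[OF MV finV] by auto
  qed
  ultimately show ?thesis
    using SH yS MV unfolding S_def valid_hyperedge_def by blast
qed

context
  fixes V :: "'a set" and Adj H E C c y
  assumes sg: "simple_graph V Adj" and opt: "optimal_connecting_hypergraph V Adj H"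
    and EH: "E \<in> H" and CE: "C \<subseteq> E" and cC: "c \<in> C"
    and yV: "y \<in> V" and yE: "y \<notin> E" and cy: "compl_adj Adj c y"
begin

private lemma finite_hyperedge: "finite E"
  using sg optimal_connecting_hypergraph_subset[OF opt EH] finite_subset
  unfolding simple_graph_def by blast

private lemma merge_data:
  obtains S M where "S \<subseteq> H" "finite S" "E \<notin> S" "S \<noteq> {}" "valid_hyperedge V Adj M"
    "C \<subseteq> M" "\<forall>G\<in>S. covers_non_edges Adj {M} G" "card M \<le> card C + hcost S + 1"
proof -
  have ch: "connecting_hypergraph V Adj H"
    using opt by (rule optimal_connecting_hypergraph_connecting)
  have "C \<subseteq> V" "y \<notin> C"
    using CE yE optimal_connecting_hypergraph_subset[OF opt EH] by blast+
  then obtain S where SH: "S \<subseteq> H" and Sne: "S \<noteq> {}" and yS: "\<forall>G\<in>S. y \<in> G"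
    and M: "valid_hyperedge V Adj (C \<union> \<Union>S)" and cardM: "card (C \<union> \<Union>S) \<le> card C + hcost S + 1"
    using merged_hyperedge_exists[OF sg ch _ cC yV _ cy] by blast
  have finS: "finite S"
    using connecting_hypergraph_finite[OF sg ch] SH finite_subset by blast
  have ES: "E \<notin> S"
    using yS yE by blast
  have coversS: "\<forall>G\<in>S. covers_non_edges Adj {C \<union> \<Union>S} G"
  proof
    fix G assume "G \<in> S"
    then have "G \<subseteq> C \<union> \<Union>S"
      by blast
    then show "covers_non_edges Adj {C \<union> \<Union>S} G"
      by (rule covers_non_edges_subset) simp
  qed
  show ?thesis
    by (rule that[OF SH finS ES Sne M _ coversS cardM]) blast
qed

(* Replacing E and the merged hyperedges by their union costs no more and saves a hyperedge. *)
lemma optimal_absorb: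
  assumes inC: "covers_non_edges Adj {C} E"
  shows "C = E"
proof (rule ccontr)
  assume "C \<noteq> E"
  obtain S M where SH: "S \<subseteq> H" and finS: "finite S" and ES: "E \<notin> S" and "S \<noteq> {}"
    and M: "valid_hyperedge V Adj M" and CM: "C \<subseteq> M"
    and coversS: "\<forall>G\<in>S. covers_non_edges Adj {M} G" and cardM: "card M \<le> card C + hcost S + 1"
    using merge_data .
  have "finite E"
    using finite_hyperedge .
  then have "card C < card E" "finite C"
    using CE \<open>C \<noteq> E\<close> psubset_card_mono finite_subset by blast+
  then have "0 < card C" "card C < card E"
    using cC card_gt_0_iff by blast+
  then have cost: "hcost {M} \<le> hcost (insert E S)"
    using cardM finS ES unfolding hcost_def by simp
  have KH: "insert E S \<subseteq> H"
    using EH SH by blast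
  have "covers_non_edges Adj {M} E"
    using covers_non_edges_mono[OF inC] CM by simp
  then have covers: "\<forall>G\<in>insert E S. covers_non_edges Adj {M} G"
    using coversS by simp
  have "card (insert E S) \<le> card {M}"
    using optimal_replace_card_ge[OF sg opt KH _ _ covers cost] M by blast
  then show False
    using finS ES \<open>S \<noteq> {}\<close> by (simp add: card_gt_0_iff)
qed

(* Replace E and the merged hyperedges by their union and the star insert p (E - C). *)
lemma optimal_split:
  assumes "C \<noteq> E" and pC: "p \<in> C" and closed: "\<forall>s\<in>C. \<forall>t\<in>E - C. \<not> compl_adj Adj s t"
  shows "\<exists>H'. optimal_connecting_hypergraph V Adj H' \<and> insert p (E - C) \<in> H'"
proof -
  obtain S M where SH: "S \<subseteq> H" and finS: "finite S" and ES: "E \<notin> S" and Sne: "S \<noteq> {}"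
    and M: "valid_hyperedge V Adj M" and CM: "C \<subseteq> M"
    and coversS: "\<forall>G\<in>S. covers_non_edges Adj {M} G" and cardM: "card M \<le> card C + hcost S + 1"
    using merge_data .
  have symp: "symp Adj"
    using sg by (rule simple_graph_symp)
  define E' where "E' = insert p (E - C)"
  have finC: "finite C" and finE: "finite E"
    using finite_hyperedge CE finite_subset by blast+
  have "C \<subset> E" "\<forall>t\<in>E - C. \<not> compl_adj Adj p t"
    using CE \<open>C \<noteq> E\<close> closed pC by blast+
  then have "valid_hyperedge V Adj E'"
    unfolding E'_def
    by (rule valid_hyperedge_star_part[OF symp optimal_connecting_hypergraph_subset[OF opt EH] finE _ pC])
  then have validN: "\<forall>G\<in>{M, E'}. valid_hyperedge V Adj G"
    using M by blast
  have "\<forall>A\<in>{C, E - C}. \<exists>B\<in>{M, E'}. A \<subseteq> B"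
    using CM unfolding E'_def by auto
  then have "covers_non_edges Adj {M, E'} E"
    by (rule covers_non_edges_mono[OF covers_non_edges_closed_part[OF symp_compl_adj[OF symp] closed]])
  moreover have "covers_non_edges Adj {M, E'} G" if "G \<in> S" for G
    using covers_non_edges_mono[of Adj "{M}" G "{M, E'}"] coversS that by simp
  ultimately have coversK: "\<forall>G\<in>insert E S. covers_non_edges Adj {M, E'} G"
    by blast
  have "card C < card E" "0 < card C"
    using finE CE \<open>C \<noteq> E\<close> psubset_card_mono pC finC card_gt_0_iff by blast+
  moreover have "card E' = card E - card C + 1"
    unfolding E'_def using pC finC CE finE by (simp add: card_Diff_subset)
  moreover have "hcost {M, E'} \<le> card M - 2 + (card E' - 2)"
    using hcost_insert_le[of "{E'}" M] unfolding hcost_def by simp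
  moreover have "hcost (insert E S) = card E - 2 + hcost S"
    using finS ES unfolding hcost_def by simp
  moreover have "2 \<le> card M"
    using M unfolding valid_hyperedge_def by blast
  ultimately have cost: "hcost {M, E'} \<le> hcost (insert E S)"
    using cardM by linarith
  have "card {M, E'} \<le> 2"
    by (simp add: card_insert_if)
  moreover have "card (insert E S) = card S + 1" "card S \<noteq> 0"
    using finS ES Sne by simp_all
  ultimately have "card {M, E'} \<le> card (insert E S)"
    by linarith
  then have "optimal_connecting_hypergraph V Adj ((H - insert E S) \<union> {M, E'})"
    using optimal_replace[OF sg opt _ _ validN coversK cost] EH SH by blast
  then show ?thesis
    unfolding E'_def by blast
qed

end

lemma optimal_hyperedge_has_non_edge:
  assumes sg: "simple_graph V Adj" and opt: "optimal_connecting_hypergraph V Adj H" and EH: "E \<in> H"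
  shows "\<exists>p\<in>E. \<exists>q\<in>E. compl_adj Adj p q"
proof (rule ccontr)
  assume "\<not> ?thesis"
  then have "\<forall>G\<in>{E}. covers_non_edges Adj {} G"
    unfolding covers_non_edges_def by blast
  moreover have "hcost {} \<le> hcost {E}" "{E} \<subseteq> H"
    using EH unfolding hcost_def by simp_all
  ultimately have "card {E} \<le> card ({} :: 'a set set)"
    using optimal_replace_card_ge[OF sg opt, of "{E}" "{}"] by blast
  then show False
    by simp
qed

context
  fixes V :: "'a set" and Adj H V0
  assumes sg: "simple_graph V Adj" and opt: "optimal_connecting_hypergraph V Adj H"
    and V0V: "V0 \<subseteq> V" and non_edges: "\<forall>s\<in>V. \<forall>t\<in>V. compl_adj Adj s t \<longrightarrow> s \<in> V0"
begin

private lemma symp_compl: "symp (compl_adj Adj)"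
  using simple_graph_symp[OF sg] by (rule symp_compl_adj)

private lemma hyperedge_non_edge_in:
  assumes "E \<in> H" "s \<in> E" "t \<in> E" "compl_adj Adj s t"
  shows "s \<in> V0" "t \<in> V0"
proof -
  have "compl_adj Adj t s"
    using assms(4) symp_compl by (blast dest: sympD)
  then show "s \<in> V0" "t \<in> V0"
    using non_edges assms optimal_connecting_hypergraph_subset[OF opt] by blast+
qed

lemma optimal_hyperedge_not_psupset:
  assumes "valid_hyperedge V Adj V0" "E \<in> H"
  shows "\<not> V0 \<subset> E"
proof
  assume "V0 \<subset> E"
  have "covers_non_edges Adj {V0} E"
    unfolding covers_non_edges_def
  proof (intro ballI impI)
    fix u v assume "u \<in> E" "v \<in> E" "compl_adj Adj u v"
    then show "\<exists>G\<in>{V0}. u \<in> G \<and> v \<in> G"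
      using hyperedge_non_edge_in[OF assms(2)] by simp
  qed
  then have "hcost {E} \<le> hcost {V0}"
    using optimal_replace_hcost_ge[OF sg opt, of "{E}" "{V0}"] assms by blast
  moreover have "card V0 < card E"
    using \<open>V0 \<subset> E\<close> optimal_connecting_hypergraph_subset[OF opt assms(2)] sg
      psubset_card_mono finite_subset unfolding simple_graph_def by metis
  moreover have "2 \<le> card V0"
    using assms(1) unfolding valid_hyperedge_def by blast
  ultimately show False
    unfolding hcost_def by simp
qed

context
  assumes coV0: "coconnected_on Adj V0"
begin

lemma optimal_closed_part_no_exit:
  assumes EH: "E \<in> H" and CE: "C \<subset> E" and closed: "\<forall>s\<in>C. \<forall>t\<in>E - C. \<not> compl_adj Adj s t"
    and cC: "c \<in> C" and yV: "y \<in> V" and yE: "y \<notin> E"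
  shows "\<not> compl_adj Adj c y"
proof
  assume cy: "compl_adj Adj c y"
  show False
  proof (cases "\<exists>p\<in>E - C. \<exists>q\<in>E - C. compl_adj Adj p q")
    case False
    have "covers_non_edges Adj {C} E"
      unfolding covers_non_edges_def
    proof (intro ballI impI)
      fix u v assume "u \<in> E" "v \<in> E" "compl_adj Adj u v"
      then obtain G where "G \<in> {C, E - C}" "u \<in> G" "v \<in> G"
        using covers_non_edges_closed_part[OF symp_compl closed]
        unfolding covers_non_edges_def by blast
      then show "\<exists>G\<in>{C}. u \<in> G \<and> v \<in> G"
        using False \<open>compl_adj Adj u v\<close> by blast
    qed
    then show False
      using optimal_absorb[OF sg opt EH _ cC yV yE cy] CE by blast
  next
    case True
    then obtain p q where pC: "p \<in> E - C" and "q \<in> E - C" and "compl_adj Adj p q"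
      by blast
    then have pV0: "p \<in> V0"
      using hyperedge_non_edge_in[OF EH] by blast
    have cV0: "c \<in> V0"
      using non_edges cC CE yV cy optimal_connecting_hypergraph_subset[OF opt EH] by blast
    define E' where "E' = insert c (E - C)"
    obtain H' where opt': "optimal_connecting_hypergraph V Adj H'" and E'H': "E' \<in> H'"
      using optimal_split[OF sg opt EH _ cC yV yE cy _ cC closed] CE unfolding E'_def by blast
    obtain c' y' where c': "c' \<in> E - C" and y'V0: "y' \<in> V0" and y': "y' \<notin> E - C"
      and c'y': "compl_adj Adj c' y'"
      using connected_on_exit[OF coV0[unfolded coconnected_on_def] pV0 pC cV0] cC by blast
    have "y' \<noteq> c"
      using closed cC c' c'y' symp_compl by (blast dest: sympD)
    then have "y' \<notin> E'"
      using y' unfolding E'_def by blast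
    have "covers_non_edges Adj {E - C} E'"
      unfolding E'_def using covers_non_edges_insert[OF symp_compl] closed cC by blast
    then have "E - C = E'"
      using optimal_absorb[OF sg opt' E'H' _ c' _ \<open>y' \<notin> E'\<close> c'y'] V0V y'V0
      unfolding E'_def by blast
    then show False
      using cC unfolding E'_def by blast
  qed
qed

lemma optimal_hyperedge_coconnected:
  assumes conV0: "connected_on Adj V0" and EH: "E \<in> H"
  shows "coconnected_on Adj E"
proof (rule ccontr)
  assume "\<not> coconnected_on Adj E"
  obtain p q where pE: "p \<in> E" and qE: "q \<in> E" and pq: "compl_adj Adj p q"
    using optimal_hyperedge_has_non_edge[OF sg opt EH] by blast
  obtain C where pC: "p \<in> C" and CE: "C \<subset> E" and closed: "\<forall>s\<in>C. \<forall>t\<in>E - C. \<not> compl_adj Adj s t"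
    using connected_on_component[OF symp_compl pE] \<open>\<not> coconnected_on Adj E\<close>
    unfolding coconnected_on_def by blast
  have pV0: "p \<in> V0" and qV0: "q \<in> V0"
    using hyperedge_non_edge_in[OF EH pE qE pq] by blast+
  show False
  proof (cases "V0 \<subseteq> C")
    case True
    have "finite V0" "p \<noteq> q"
      using V0V sg finite_subset pq unfolding simple_graph_def compl_adj_def by blast+
    then have "valid_hyperedge V Adj V0"
      using V0V conV0 pV0 qV0 card_mono[of V0 "{p, q}"] unfolding valid_hyperedge_def by simp
    then show False
      using optimal_hyperedge_not_psupset[OF _ EH] True CE by blast
  next
    case False
    then obtain c y where "c \<in> C" "y \<in> V0" "y \<notin> C" "compl_adj Adj c y"
      using connected_on_exit[OF coV0[unfolded coconnected_on_def] pV0 pC] by blast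
    moreover have "y \<notin> E"
      using closed \<open>c \<in> C\<close> \<open>y \<notin> C\<close> \<open>compl_adj Adj c y\<close> by blast
    ultimately show False
      using optimal_closed_part_no_exit[OF EH CE closed] V0V by blast
  qed
qed

end

end

theorem lemma6:
  fixes V :: "'a set" and Adj :: "'a \<Rightarrow> 'a \<Rightarrow> bool"
  assumes "simple_graph V Adj"
    and "connected_on Adj V"
    and "2 \<le> card V"
    and "coconnected_on Adj V \<or>
         (\<exists>x. dominating V Adj x \<and> connected_on Adj (V - {x}) \<and> coconnected_on Adj (V - {x}))"
  shows "\<exists>H. min_cost_connecting_hypergraph V Adj H \<and> (\<forall>E\<in>H. coconnected_on Adj E)"
proof -
  obtain V0 where "V0 \<subseteq> V" "connected_on Adj V0" "coconnected_on Adj V0"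
    and "\<forall>s\<in>V. \<forall>t\<in>V. compl_adj Adj s t \<longrightarrow> s \<in> V0"
  proof (cases "coconnected_on Adj V")
    case True
    then show ?thesis
      using that[of V] assms(2) by blast
  next
    case False
    then obtain x where "dominating V Adj x" "connected_on Adj (V - {x})" "coconnected_on Adj (V - {x})"
      using assms(4) by blast
    moreover have "\<forall>s\<in>V. \<forall>t\<in>V. compl_adj Adj s t \<longrightarrow> s \<in> V - {x}"
      using \<open>dominating V Adj x\<close> unfolding dominating_def compl_adj_def by auto
    ultimately show ?thesis
      using that[of "V - {x}"] by blast
  qed
  moreover obtain H where "optimal_connecting_hypergraph V Adj H"
    using optimal_connecting_hypergraph_exists[OF assms(2,3)] by blast
  ultimately show ?thesis
    using optimal_hyperedge_coconnected[OF assms(1)]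
    unfolding optimal_connecting_hypergraph_def by blast
qed

end
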